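(* Let $E$ be a finite-dimensional real inner product space and $C(t)=\bigcap_{i=1}^k\{x\in E:(x,n_i)_0\le c_i(t)\}$ with $n_i\in E$ and globally Lipschitz continuous functions $c_i$, $C(t)$ nonempty. Assume that for each $t\in[0,T]$ and $x\in C(t)$ the vectors $\{n_i:i\in J(t,x)\}$ are linearly independent, where $J(t,x)=\{i:(x,n_i)_0=c_i(t)\}$. Then for a solution $x$ of $-\dot x\in N^0_{C(t)}(x)$ on $[0,T]$ there exist integrable functions $\lambda_i:[0,T]\to[0,\infty)$, $i=1,\dots,k$, such that $-\dot x(t)=\sum_{i=1}^k\lambda_i(t)n_i$ for a.a. $t\in[0,T]$.
   Context: $N^0_K(x)=\{\zeta:(\zeta,c-x)_0\le0\ \forall c\in K\}$ if $x\in K$, $\emptyset$ otherwise. A solution is a Lipschitz function with $x(t)\in C(t)$ satisfying the inclusion a.e. *)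

theory Defs
  imports "HOL-Analysis.Analysis"
begin

definition normal_cone0 :: "'a::real_inner set \<Rightarrow> 'a \<Rightarrow> 'a set" where
  "normal_cone0 K x = (if x \<in> K then {\<zeta>. \<forall>c\<in>K. inner \<zeta> (c - x) \<le> 0} else {})"

definition polyC :: "nat \<Rightarrow> (nat \<Rightarrow> 'a::real_inner) \<Rightarrow> (nat \<Rightarrow> real \<Rightarrow> real) \<Rightarrow> real \<Rightarrow> 'a set" where
  "polyC k n c t = {x. \<forall>i\<in>{1..k}. inner x (n i) \<le> c i t}"

definition active_set :: "nat \<Rightarrow> (nat \<Rightarrow> 'a::real_inner) \<Rightarrow> (nat \<Rightarrow> real \<Rightarrow> real) \<Rightarrow> real \<Rightarrow> 'a \<Rightarrow> nat set" where
  "active_set k n c t x = {i\<in>{1..k}. inner x (n i) = c i t}"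

definition lin_indep_family :: "nat set \<Rightarrow> (nat \<Rightarrow> 'a::real_vector) \<Rightarrow> bool" where
  "lin_indep_family J n = (\<forall>u. (\<Sum>i\<in>J. u i *\<^sub>R n i) = 0 \<longrightarrow> (\<forall>i\<in>J. u i = 0))"

definition sweeping_solution :: "(real \<Rightarrow> 'a::real_inner set) \<Rightarrow> real \<Rightarrow> (real \<Rightarrow> 'a) \<Rightarrow> bool" where
  "sweeping_solution C T x =
     ((\<exists>L. L-lipschitz_on {0..T} x) \<and> (\<forall>t\<in>{0..T}. x t \<in> C t) \<and>
      (AE t in lebesgue. t \<in> {0..T} \<longrightarrow>
         x differentiable (at t) \<and> - vector_derivative x (at t) \<in> normal_cone0 (C t) (x t)))"

end

theory Submission
  imports Defs
begin

text \<open>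
  Where \<open>x\<close> is differentiable, \<open>-x'(t)\<close> lies in the normal cone of the polyhedron \<open>C(t)\<close>
  at \<open>x(t)\<close>; that cone is generated by the active normals, and since these are linearly
  independent the coefficients are \<open>(a\<^sub>i, -x'(t))\<close> for a biorthogonal system \<open>a\<^sub>i\<close>.
  Fixing one biorthogonal system for each of the finitely many possible active sets, the
  coefficients become measurable in \<open>t\<close>: the active set depends measurably on \<open>t\<close>, and
  \<open>x'\<close> agrees a.e. with a Borel limit of difference quotients. Being bounded by a multiple
  of the Lipschitz constant of \<open>x\<close>, they are integrable on \<open>[0,T]\<close>.
\<close>

definition biorthogonal :: "nat set \<Rightarrow> (nat \<Rightarrow> 'a::real_inner) \<Rightarrow> (nat \<Rightarrow> 'a) \<Rightarrow> bool" where
  "biorthogonal J a n \<longleftrightarrow> (\<forall>i\<in>J. \<forall>j\<in>J. a i \<bullet> n j = (if i = j then 1 else 0))"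

lemma lin_indep_family_inj_on:
  fixes n :: "nat \<Rightarrow> 'a::real_vector"
  assumes "finite J" and "lin_indep_family J n"
  shows "inj_on n J"
proof (rule inj_onI, rule ccontr)
  fix i j assume ij: "i \<in> J" "j \<in> J" "n i = n j" "i \<noteq> j"
  define u where "u = (\<lambda>l. if l = i then 1 else if l = j then -1 else (0::real))"
  have "(\<Sum>l\<in>J. u l *\<^sub>R n l) = (\<Sum>l\<in>J. (if l = i then n i else 0) - (if l = j then n j else 0))"
    by (rule sum.cong) (auto simp: u_def ij)
  also have "\<dots> = 0" using ij assms(1) by (simp add: sum_subtractf)
  finally have "u i = 0"
    using assms(2)[unfolded lin_indep_family_def, THEN spec, of u] ij by blast
  then show False by (simp add: u_def)
qed

lemma lin_indep_family_imp_independent: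
  fixes n :: "nat \<Rightarrow> 'a::real_vector"
  assumes fin: "finite J" and li: "lin_indep_family J n"
  shows "independent (n ` J)"
proof
  assume "dependent (n ` J)"
  then obtain u where u: "\<exists>v\<in>n ` J. u v \<noteq> 0" "(\<Sum>v\<in>n ` J. u v *\<^sub>R v) = 0"
    using fin by (auto simp: real_vector.dependent_finite)
  have "(\<Sum>l\<in>J. u (n l) *\<^sub>R n l) = 0"
    using u(2) by (simp add: sum.reindex[OF lin_indep_family_inj_on[OF fin li]])
  then have "\<forall>l\<in>J. u (n l) = 0"
    using li[unfolded lin_indep_family_def, THEN spec, of "\<lambda>l. u (n l)"] by blast
  then show False using u(1) by auto
qed

lemma lin_indep_family_biorthogonal:
  fixes n :: "nat \<Rightarrow> 'a::euclidean_space"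
  assumes fin: "finite J" and li: "lin_indep_family J n"
  shows "\<exists>a. biorthogonal J a n"
proof -
  have "\<forall>i\<in>J. \<exists>b. \<forall>j\<in>J. b \<bullet> n j = (if i = j then 1 else 0)"
  proof
    fix i assume i: "i \<in> J"
    obtain g :: "'a \<Rightarrow> real" where g: "linear g" "\<forall>w\<in>n ` J. g w = (if w = n i then 1 else 0)"
      using real_vector.linear_independent_extend[OF lin_indep_family_imp_independent[OF fin li],
          of "\<lambda>w. if w = n i then 1 else 0"]
      by blast
    have "adjoint g 1 \<bullet> n j = (if i = j then 1 else 0)" if j: "j \<in> J" for j
    proof -
      have "adjoint g 1 \<bullet> n j = g (n j)"
        using adjoint_works[OF g(1), of "n j" 1] by (simp add: inner_commute)
      also have "\<dots> = (if n j = n i then 1 else 0)"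
        using g(2) j by simp
      also have "\<dots> = (if i = j then 1 else 0)"
        using inj_on_eq_iff[OF lin_indep_family_inj_on[OF fin li] j i] by auto
      finally show ?thesis .
    qed
    then show "\<exists>b. \<forall>j\<in>J. b \<bullet> n j = (if i = j then 1 else 0)" by blast
  qed
  then show ?thesis
    unfolding biorthogonal_def by (rule bchoice)
qed

lemma lin_indep_family_biorthogonal_choice:
  fixes n :: "nat \<Rightarrow> 'a::euclidean_space"
  obtains a where "\<And>J. finite J \<Longrightarrow> lin_indep_family J n \<Longrightarrow> biorthogonal J (a J) n"
proof -
  have "\<exists>b. finite J \<and> lin_indep_family J n \<longrightarrow> biorthogonal J b n" for J
    using lin_indep_family_biorthogonal by blast
  then show thesis
    using that by metis
qed

lemma normal_cone0_polyC_inner_nonpos: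
  fixes n :: "nat \<Rightarrow> 'a::real_inner"
  assumes y: "y \<in> polyC k n c t" and v: "v \<in> normal_cone0 (polyC k n c t) y"
    and d: "\<forall>j\<in>active_set k n c t y. d \<bullet> n j \<le> 0"
  shows "v \<bullet> d \<le> 0"
proof -
  \<comment> \<open>\<open>y + e d \<in> C(t)\<close> for small \<open>e > 0\<close>: active constraints by the sign of \<open>d\<close>,
    inactive ones by their slack.\<close>
  define I where "I = {1..k} - active_set k n c t y"
  have "\<forall>\<^sub>F e in at_right 0. e * (d \<bullet> n i) < c i t - y \<bullet> n i" if "i \<in> I" for i
  proof -
    have "0 < c i t - y \<bullet> n i"
      using that y unfolding I_def active_set_def polyC_def by force
    moreover have "((\<lambda>e. e * (d \<bullet> n i)) \<longlongrightarrow> 0) (at_right (0::real))"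
      by (auto intro!: tendsto_eq_intros)
    ultimately show ?thesis by (simp add: order_tendstoD(2))
  qed
  then have "\<forall>\<^sub>F e in at_right 0. \<forall>i\<in>I. e * (d \<bullet> n i) < c i t - y \<bullet> n i"
    by (simp add: I_def eventually_ball_finite)
  then obtain e :: real where e: "0 < e" "\<forall>i\<in>I. e * (d \<bullet> n i) < c i t - y \<bullet> n i"
    using eventually_happens'[OF trivial_limit_at_right_real
        eventually_conj[OF _ eventually_at_right_less]] by blast
  have "(y + e *\<^sub>R d) \<bullet> n i \<le> c i t" if i: "i \<in> {1..k}" for i
  proof (cases "i \<in> active_set k n c t y")
    case True
    then show ?thesis
      using d e(1) by (auto simp: active_set_def inner_add_left mult_nonneg_nonpos)
  next
    case False
    then have "e * (d \<bullet> n i) < c i t - y \<bullet> n i" using e(2) i by (simp add: I_def)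
    then show ?thesis by (simp add: inner_add_left)
  qed
  then have "v \<bullet> (e *\<^sub>R d) \<le> 0"
    using v y by (fastforce simp: normal_cone0_def polyC_def)
  then show ?thesis using e(1) by (simp add: mult_le_0_iff)
qed

lemma in_span_if_inner_nonpos_on_orthogonal:
  fixes v :: "'a::euclidean_space"
  assumes "\<And>d. (\<forall>w\<in>S. d \<bullet> w = 0) \<Longrightarrow> v \<bullet> d \<le> 0"
  shows "v \<in> span S"
proof -
  have "v \<bullet> d = 0" if "d \<in> (span S)\<^sup>\<bottom>" for d
  proof -
    have "\<forall>w\<in>S. d \<bullet> w = 0" "\<forall>w\<in>S. (- d) \<bullet> w = 0"
      using that by (auto simp: orthogonal_comp_def orthogonal_def inner_commute intro: span_base)
    then show ?thesis using assms[of d] assms[of "- d"] by simp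
  qed
  then have "v \<in> (span S)\<^sup>\<bottom>\<^sup>\<bottom>"
    by (auto simp: orthogonal_comp_def orthogonal_def inner_commute)
  then show ?thesis by (simp add: orthogonal_comp_self)
qed

lemma normal_cone0_polyC_expansion:
  fixes n :: "nat \<Rightarrow> 'a::euclidean_space"
  assumes y: "y \<in> polyC k n c t" and v: "v \<in> normal_cone0 (polyC k n c t) y"
    and a: "biorthogonal (active_set k n c t y) a n"
  shows "v = (\<Sum>i\<in>active_set k n c t y. (a i \<bullet> v) *\<^sub>R n i)"
    and "\<forall>i\<in>active_set k n c t y. 0 \<le> a i \<bullet> v"
proof -
  let ?J = "active_set k n c t y"
  have "finite ?J" by (simp add: active_set_def)
  have span: "v \<in> span (n ` ?J)"
    by (rule in_span_if_inner_nonpos_on_orthogonal)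
       (simp add: normal_cone0_polyC_inner_nonpos[OF y v])
  have lin: "linear (\<lambda>w. \<Sum>i\<in>?J. (a i \<bullet> w) *\<^sub>R n i)"
    by (rule linearI) (simp_all add: inner_add_right scaleR_add_left sum.distrib scaleR_sum_right)
  have "n j = (\<Sum>i\<in>?J. (a i \<bullet> n j) *\<^sub>R n i)" if "j \<in> ?J" for j
    using a that \<open>finite ?J\<close> by (simp add: biorthogonal_def if_distrib[of "\<lambda>r. r *\<^sub>R _"] cong: if_cong)
  then show "v = (\<Sum>i\<in>?J. (a i \<bullet> v) *\<^sub>R n i)"
    using real_vector.linear_eq_on_span[OF linear_id lin _ span] by auto
  show "\<forall>i\<in>?J. 0 \<le> a i \<bullet> v"
    using normal_cone0_polyC_inner_nonpos[OF y v, of "- a _"] a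
    by (simp add: biorthogonal_def inner_commute)
qed

lemma difference_quotient_tendsto_vector_derivative:
  fixes f :: "real \<Rightarrow> 'a::real_normed_vector"
  assumes "f differentiable (at t)"
  shows "(\<lambda>m. real m *\<^sub>R (f (t + 1 / real m) - f t)) \<longlonglongrightarrow> vector_derivative f (at t)"
proof -
  define f' where "f' = vector_derivative f (at t)"
  have "(f has_vector_derivative f') (at t)"
    using assms unfolding f'_def by (rule vector_derivative_works[THEN iffD1])
  then have "(f has_derivative (\<lambda>h. h *\<^sub>R f')) (at t)"
    by (unfold has_vector_derivative_def)
  then have "((\<lambda>h. norm (f (t + h) - f t - h *\<^sub>R f') / norm h) \<longlongrightarrow> 0) (at 0)"
    by (simp add: has_derivative_at)
  moreover have "\<forall>\<^sub>F h in at 0. norm (f (t + h) - f t - h *\<^sub>R f') / norm h =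
      norm ((f (t + h) - f t) /\<^sub>R h - f')"
  proof (rule eventually_at_filter[THEN iffD2], intro always_eventually allI impI)
    fix h :: real assume "h \<noteq> 0"
    then have "(f (t + h) - f t) /\<^sub>R h - f' = (f (t + h) - f t - h *\<^sub>R f') /\<^sub>R h"
      by (simp add: scaleR_diff_right)
    then show "norm (f (t + h) - f t - h *\<^sub>R f') / norm h = norm ((f (t + h) - f t) /\<^sub>R h - f')"
      by (simp add: divide_inverse mult.commute)
  qed
  ultimately have "((\<lambda>h. norm ((f (t + h) - f t) /\<^sub>R h - f')) \<longlongrightarrow> 0) (at 0)"
    by (rule Lim_transform_eventually)
  then have "((\<lambda>h. (f (t + h) - f t) /\<^sub>R h) \<longlongrightarrow> f') (at 0)"
    by (rule Lim_null[THEN iffD2, OF tendsto_norm_zero_cancel])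
  moreover have "filterlim (\<lambda>m. inverse (real m)) (at 0) sequentially"
    using filterlim_compose[OF filterlim_inverse_at_right_top filterlim_real_sequentially]
    by (rule filterlim_mono) (simp_all add: at_le)
  ultimately have "(\<lambda>m. (f (t + inverse (real m)) - f t) /\<^sub>R inverse (real m)) \<longlonglongrightarrow> f'"
    by (rule filterlim_compose)
  then show ?thesis
    by (simp add: f'_def divide_inverse)
qed

lemma lipschitz_on_clamp_difference_quotient_bound:
  fixes f :: "real \<Rightarrow> 'a::real_normed_vector"
  assumes L: "L-lipschitz_on {a..b} f"
  shows "norm (real m *\<^sub>R (f (clamp a b (t + 1 / real m)) - f (clamp a b t))) \<le> L"
proof (cases "m = 0")
  case False
  have "dist (f (clamp a b (t + 1 / real m))) (f (clamp a b t))
      \<le> L * dist (clamp a b (t + 1 / real m)) (clamp a b t)"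
  proof (cases "a \<le> b")
    case True
    then have "clamp a b (t + 1 / real m) \<in> {a..b}" "clamp a b t \<in> {a..b}"
      using clamp_in_interval[of a b] by (simp_all add: cbox_interval)
    then show ?thesis
      by (rule lipschitz_onD[OF L])
  next
    case False
    then show ?thesis
      using clamp_empty_interval[of 1 b a] lipschitz_on_nonneg[OF L] by simp
  qed
  also have "\<dots> \<le> L * (1 / real m)"
    using dist_clamps_le_dist_args[of a b "t + 1 / real m" t] lipschitz_on_nonneg[OF L]
    by (intro mult_left_mono) (simp_all add: dist_real_def)
  finally have "real m * dist (f (clamp a b (t + 1 / real m))) (f (clamp a b t))
      \<le> real m * (L * (1 / real m))"
    by (intro mult_left_mono) auto
  then show ?thesis
    using False by (simp add: dist_norm)
qed (simp add: lipschitz_on_nonneg[OF L])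

lemma eventually_clamp_add_inverse_nat:
  assumes "t \<in> {a<..<b}"
  shows "\<forall>\<^sub>F m in sequentially. clamp a b (t + 1 / real m) = t + 1 / real m"
proof -
  have "\<forall>\<^sub>F m in sequentially. 1 / real m < b - t"
    using assms by (intro order_tendstoD(2)[OF lim_const_over_n]) simp
  then show ?thesis
  proof eventually_elim
    case (elim m)
    have "a \<le> t + 1 / real m"
      using assms by (intro add_increasing2) auto
    with elim have "t + 1 / real m \<in> cbox a b"
      by (simp add: cbox_interval)
    then show ?case by simp
  qed
qed

lemma lipschitz_vector_derivative_borel_representative:
  fixes f :: "real \<Rightarrow> 'a::euclidean_space"
  assumes L: "L-lipschitz_on {a..b} f"
  obtains D where "D \<in> borel_measurable borel" and "\<And>t. norm (D t) \<le> L"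
    and "\<And>t. t \<in> {a<..<b} \<Longrightarrow> f differentiable (at t) \<Longrightarrow> D t = vector_derivative f (at t)"
proof
  \<comment> \<open>Clamping extends \<open>f\<close> continuously to \<open>\<real>\<close>, so the difference quotients are Borel.
    Where they diverge \<open>lim\<close> is arbitrary; truncating at \<open>L\<close> keeps \<open>D\<close> bounded.\<close>
  define q where "q m t = real m *\<^sub>R (f (clamp a b (t + 1 / real m)) - f (clamp a b t))" for m t
  define D0 where "D0 t = lim (\<lambda>m. q m t)" for t
  define D where "D t = (if norm (D0 t) \<le> L then D0 t else 0)" for t
  have "continuous_on UNIV (\<lambda>t. f (clamp a b t))"
    using lipschitz_on_continuous_on[OF L] by (intro clamp_continuous_on) simp
  then have [measurable]: "(\<lambda>t. f (clamp a b t)) \<in> borel_measurable borel"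
    by (rule borel_measurable_continuous_onI)
  have [measurable]: "D0 \<in> borel_measurable borel"
    unfolding D0_def q_def by measurable
  show "D \<in> borel_measurable borel"
    unfolding D_def by measurable
  show "norm (D t) \<le> L" for t
    using lipschitz_on_nonneg[OF L] by (simp add: D_def)
  fix t assume t: "t \<in> {a<..<b}" and diff: "f differentiable (at t)"
  have "t \<in> cbox a b"
    using t by (simp add: cbox_interval)
  then have "\<forall>\<^sub>F m in sequentially. real m *\<^sub>R (f (t + 1 / real m) - f t) = q m t"
    using eventually_clamp_add_inverse_nat[OF t] by (auto simp: q_def elim: eventually_mono)
  with difference_quotient_tendsto_vector_derivative[OF diff]
  have "(\<lambda>m. q m t) \<longlonglongrightarrow> vector_derivative f (at t)"
    by (rule Lim_transform_eventually)
  moreover from this have "norm (vector_derivative f (at t)) \<le> L"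
    by (rule Lim_norm_ubound[OF trivial_limit_sequentially])
       (unfold q_def, intro always_eventually allI lipschitz_on_clamp_difference_quotient_bound[OF L])
  ultimately show "D t = vector_derivative f (at t)"
    by (simp add: D_def D0_def limI)
qed

lemma borel_measurable_finite_cases:
  fixes F :: "'s \<Rightarrow> 'b \<Rightarrow> real"
  assumes "finite S" and "\<And>t. G t \<in> S" and "space M = UNIV"
    and "\<And>s. s \<in> S \<Longrightarrow> {t. G t = s} \<in> sets M"
    and "\<And>s. s \<in> S \<Longrightarrow> F s \<in> borel_measurable M"
  shows "(\<lambda>t. F (G t) t) \<in> borel_measurable M"
proof -
  have eq: "(\<lambda>t. F (G t) t) = (\<lambda>t. \<Sum>s\<in>S. indicator {t. G t = s} t * F s t)"
  proof
    fix t
    have "(\<Sum>s\<in>S. indicator {t. G t = s} t * F s t) = (\<Sum>s\<in>S. if G t = s then F s t else 0)"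
      by (rule sum.cong) (auto simp: indicator_def)
    then show "F (G t) t = (\<Sum>s\<in>S. indicator {t. G t = s} t * F s t)"
      using assms(1) assms(2)[of t] by simp
  qed
  show ?thesis
    unfolding eq using assms
    by (intro borel_measurable_sum borel_measurable_times borel_measurable_indicator) auto
qed

lemma active_set_clamp_level_set_borel:
  fixes n :: "nat \<Rightarrow> 'a::real_inner"
  assumes "continuous_on {a..b} x" and "\<forall>i\<in>{1..k}. continuous_on {a..b} (c i)"
  shows "{t. active_set k n c (clamp a b t) (x (clamp a b t)) = J} \<in> sets borel"
proof -
  have [measurable]: "(\<lambda>t. x (clamp a b t) \<bullet> n i - c i (clamp a b t)) \<in> borel_measurable borel"
    if "i \<in> {1..k}" for i
    using assms that
    by (intro borel_measurable_continuous_onI continuous_intros continuous_on_inner clamp_continuous_on)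
       (simp_all add: cbox_interval)
  have "{t. active_set k n c (clamp a b t) (x (clamp a b t)) = J} =
        {t. J \<subseteq> {1..k} \<and> (\<forall>i\<in>{1..k}. i \<in> J \<longleftrightarrow> x (clamp a b t) \<bullet> n i - c i (clamp a b t) = 0)}"
    by (auto simp: active_set_def)
  also have "\<dots> \<in> sets borel"
    by measurable
  finally show ?thesis .
qed

lemma set_integrable_active_multiplier:
  fixes D :: "real \<Rightarrow> 'a::euclidean_space" and a :: "nat set \<Rightarrow> nat \<Rightarrow> 'a"
  assumes D: "D \<in> borel_measurable borel" "\<And>t. norm (D t) \<le> L"
    and J: "finite I" "\<And>t. J t \<subseteq> I" "\<And>S. {t. J t = S} \<in> sets borel"
  shows "set_integrable lebesgue {l..u} (\<lambda>t. if i \<in> J t then max 0 (a (J t) i \<bullet> D t) else 0)"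
proof -
  let ?lam = "\<lambda>t. if i \<in> J t then max 0 (a (J t) i \<bullet> D t) else 0"
  have "?lam \<in> borel_measurable borel"
  proof (rule borel_measurable_finite_cases[of "Pow I"])
    show "\<And>S. S \<in> Pow I \<Longrightarrow> (\<lambda>t. if i \<in> S then max 0 (a S i \<bullet> D t) else 0) \<in> borel_measurable borel"
      using D(1) by measurable
  qed (use J in auto)
  then have measurable: "?lam \<in> borel_measurable lebesgue"
    by (intro measurable_completion) simp
  have "norm (?lam t) \<le> L * (\<Sum>S\<in>Pow I. norm (a S i))" for t
  proof -
    have "norm (?lam t) \<le> norm (a (J t) i) * norm (D t)"
      using Cauchy_Schwarz_ineq2[of "a (J t) i" "D t"] by auto
    also have "\<dots> \<le> norm (a (J t) i) * L"
      using D(2) by (simp add: mult_left_mono)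
    also have "\<dots> \<le> (\<Sum>S\<in>Pow I. norm (a S i)) * L"
      using J(1,2) order_trans[OF norm_ge_zero D(2)]
      by (intro mult_right_mono member_le_sum[where f="\<lambda>S. norm (a S i)"]) auto
    finally show ?thesis by (simp add: mult.commute)
  qed
  then have bounded: "AE t in lebesgue. t \<in> {l..u} \<longrightarrow> norm (?lam t) \<le> L * (\<Sum>S\<in>Pow I. norm (a S i))"
    by (intro always_eventually allI impI)
  show ?thesis
    unfolding set_integrable_def
    by (rule integrableI_bounded_set_indicator[OF _ measurable _ bounded])
       (simp_all add: emeasure_lborel_Icc_eq)
qed

lemma normal_cone0_polyC_multiplier_sum:
  fixes n :: "nat \<Rightarrow> 'a::euclidean_space"
  assumes y: "y \<in> polyC k n c t" and v: "v \<in> normal_cone0 (polyC k n c t) y"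
    and li: "lin_indep_family (active_set k n c t y) n"
    and a: "\<And>J. finite J \<Longrightarrow> lin_indep_family J n \<Longrightarrow> biorthogonal J (a J) n"
  shows "v = (\<Sum>i=1..k. (if i \<in> active_set k n c t y
                         then max 0 (a (active_set k n c t y) i \<bullet> v) else 0) *\<^sub>R n i)"
proof -
  let ?J = "active_set k n c t y"
  have b: "biorthogonal ?J (a ?J) n"
    using li by (intro a) (simp add: active_set_def)
  have "(\<Sum>i=1..k. (if i \<in> ?J then max 0 (a ?J i \<bullet> v) else 0) *\<^sub>R n i) =
        (\<Sum>i=1..k. if i \<in> ?J then (a ?J i \<bullet> v) *\<^sub>R n i else 0)"
    using normal_cone0_polyC_expansion(2)[OF y v b] by (intro sum.cong) auto
  also have "\<dots> = (\<Sum>i\<in>{1..k} \<inter> ?J. (a ?J i \<bullet> v) *\<^sub>R n i)"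
    by (simp add: sum.inter_restrict)
  also have "{1..k} \<inter> ?J = ?J"
    by (auto simp: active_set_def)
  also have "(\<Sum>i\<in>?J. (a ?J i \<bullet> v) *\<^sub>R n i) = v"
    using normal_cone0_polyC_expansion(1)[OF y v b] by simp
  finally show ?thesis by simp
qed

theorem lemma6:
  fixes k :: nat and n :: "nat \<Rightarrow> 'a::euclidean_space" and c :: "nat \<Rightarrow> real \<Rightarrow> real"
    and T :: real and x :: "real \<Rightarrow> 'a"
  assumes lip: "\<forall>i\<in>{1..k}. \<exists>L. L-lipschitz_on {0..T} (c i)"
    and nonempty: "\<forall>t\<in>{0..T}. polyC k n c t \<noteq> {}"
    and licq: "\<forall>t\<in>{0..T}. \<forall>y\<in>polyC k n c t. lin_indep_family (active_set k n c t y) n"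
    and sol: "sweeping_solution (polyC k n c) T x"
  shows "\<exists>lam :: nat \<Rightarrow> real \<Rightarrow> real.
           (\<forall>i\<in>{1..k}. set_integrable lebesgue {0..T} (lam i) \<and> (\<forall>t\<in>{0..T}. 0 \<le> lam i t)) \<and>
           (AE t in lebesgue. t \<in> {0..T} \<longrightarrow>
              - vector_derivative x (at t) = (\<Sum>i=1..k. lam i t *\<^sub>R n i))"
proof -
  obtain L where L: "L-lipschitz_on {0..T} x" and xC: "\<forall>t\<in>{0..T}. x t \<in> polyC k n c t"
    and ae: "AE t in lebesgue. t \<in> {0..T} \<longrightarrow> x differentiable (at t) \<and>
               - vector_derivative x (at t) \<in> normal_cone0 (polyC k n c t) (x t)"
    using sol unfolding sweeping_solution_def by blast
  obtain D where D: "D \<in> borel_measurable borel" "\<And>t. norm (D t) \<le> L"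
    "\<And>t. t \<in> {0<..<T} \<Longrightarrow> x differentiable (at t) \<Longrightarrow> D t = vector_derivative x (at t)"
    using lipschitz_vector_derivative_borel_representative[OF L] by blast
  obtain a where a: "\<And>J. finite J \<Longrightarrow> lin_indep_family J n \<Longrightarrow> biorthogonal J (a J) n"
    using lin_indep_family_biorthogonal_choice by blast
  define J where "J t = active_set k n c (clamp 0 T t) (x (clamp 0 T t))" for t
  define lam where "lam i t = (if i \<in> J t then max 0 (a (J t) i \<bullet> - D t) else 0)" for i t
  have integrable: "set_integrable lebesgue {0..T} (lam i)" for i
    unfolding lam_def J_def using D(1,2) lip lipschitz_on_continuous_on[OF L]
    by (intro set_integrable_active_multiplier[where I="{1..k}"] active_set_clamp_level_set_borel)
       (auto simp: active_set_def intro: lipschitz_on_continuous_on)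
  have multipliers: "- vector_derivative x (at t) = (\<Sum>i=1..k. lam i t *\<^sub>R n i)"
    if "t \<in> {0<..<T}" "x differentiable (at t)"
      and "- vector_derivative x (at t) \<in> normal_cone0 (polyC k n c t) (x t)" for t
  proof -
    have J_t: "J t = active_set k n c t (x t)"
      using that(1) by (simp add: J_def cbox_interval)
    show ?thesis
      unfolding lam_def J_t D(3)[OF that(1,2)]
      by (rule normal_cone0_polyC_multiplier_sum[OF _ that(3) _ a]) (use xC licq that(1) in auto)
  qed
  have "AE t in lebesgue. t \<noteq> 0 \<and> t \<noteq> T"
    unfolding eventually_ae_filter_negligible by (rule exI[of _ "{0, T}"]) auto
  with ae have "AE t in lebesgue. t \<in> {0..T} \<longrightarrow>
      - vector_derivative x (at t) = (\<Sum>i=1..k. lam i t *\<^sub>R n i)"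
    by eventually_elim (intro impI multipliers; auto)
  with integrable show ?thesis
    by (intro exI[of _ lam]) (auto simp: lam_def)
qed

end
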